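(* The augmentation homomorphism $\varepsilon_1:\Lambda(\mathbb{Q}\mathrm{Tree})\to L_0$ has no splitting preserving the units; that is, there is no Lie algebra homomorphism $s:L_0\to\Lambda(\mathbb{Q}\mathrm{Tree})$ with $\varepsilon_1\circ s=\mathrm{id}_{L_0}$ and $s\left(x\frac{d}{dx}\right)=1\in\mathrm{Tree}((1))$.
   Context: $\mathrm{Tree}((m))$, $m\ge1$, is the set of planar rooted trees with one root at the bottom and $m$ leaves at the top labeled $1,\dots,m$ from left to right, every internal vertex having at least two inputs; equivalently, meaningful ways of inserting parentheses into the word $12\cdots m$ (e.g. $\mathrm{Tree}((3))=\{((12)3),(1(23)),(123)\}$). Composition $S\circ_iT$ grafts the root of $T$ to the $i$-th leaf of $S$, making $\mathrm{Tree}$ a nonsymmetric operad of sets with unit the trivial tree $1\in\mathrm{Tree}((1))$. $\Lambda(\mathbb{Q}\mathrm{Tree})=\bigoplus_{m\ge1}\mathbb{Q}\mathrm{Tree}((m))$ with Lie bracket $[c,d]=\sum_{t=1}^{j}d\circ_tc-\sum_{s=1}^{k}c\circ_sd$ for $c\in\mathrm{Tree}((k))$, $d\in\mathrm{Tree}((j))$, extended bilinearly. $L_0=x\mathbb{Q}[x]\frac{d}{dx}$ is the Lie algebra of polynomial vector fields on the line vanishing at $0$. The augmentation $\varepsilon_1$ is the (surjective) Lie algebra homomorphism sending every tree in $\mathrm{Tree}((m))$ to $x^m\frac{d}{dx}$. *)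

theory Defs
  imports "HOL-Computational_Algebra.Polynomial"
begin

datatype ptree = Leaf | Node "ptree list"

primrec wf_tree :: "ptree \<Rightarrow> bool" and wf_trees :: "ptree list \<Rightarrow> bool" where
  "wf_tree Leaf = True"
| "wf_tree (Node ts) = (2 \<le> length ts \<and> wf_trees ts)"
| "wf_trees [] = True"
| "wf_trees (t # ts) = (wf_tree t \<and> wf_trees ts)"

primrec leaves :: "ptree \<Rightarrow> nat" and leaves_list :: "ptree list \<Rightarrow> nat" where
  "leaves Leaf = 1"
| "leaves (Node ts) = leaves_list ts"
| "leaves_list [] = 0"
| "leaves_list (t # ts) = leaves t + leaves_list ts"

text \<open>\<open>graft0 S i T\<close>: graft the root of T onto the leaf of S with 0-based index i (left to right).\<close>
fun graft0 :: "ptree \<Rightarrow> nat \<Rightarrow> ptree \<Rightarrow> ptree"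
  and graft_list :: "ptree list \<Rightarrow> nat \<Rightarrow> ptree \<Rightarrow> ptree list" where
  "graft0 Leaf i T = (if i = 0 then T else Leaf)"
| "graft0 (Node ts) i T = Node (graft_list ts i T)"
| "graft_list [] i T = []"
| "graft_list (t # ts) i T =
     (if i < leaves t then graft0 t i T # ts else t # graft_list ts (i - leaves t) T)"

text \<open>Operadic composition \<open>S \<circ>\<^sub>i T\<close> with 1-based leaf index i.\<close>
definition ocomp :: "ptree \<Rightarrow> nat \<Rightarrow> ptree \<Rightarrow> ptree" where
  "ocomp S i T = graft0 S (i - 1) T"

text \<open>Elements of \<open>\<Lambda>(\<bbbQ>Tree)\<close>: finitely supported rational functions on well-formed trees.\<close>
definition supp :: "(ptree \<Rightarrow> rat) \<Rightarrow> ptree set" where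
  "supp c = {t. c t \<noteq> 0}"

definition LamQTree :: "(ptree \<Rightarrow> rat) set" where
  "LamQTree = {c. finite (supp c) \<and> (\<forall>t\<in>supp c. wf_tree t)}"

definition basis :: "ptree \<Rightarrow> ptree \<Rightarrow> rat" where
  "basis t = (\<lambda>u. if u = t then 1 else 0)"

definition tree_br :: "ptree \<Rightarrow> ptree \<Rightarrow> ptree \<Rightarrow> rat" where
  "tree_br c d = (\<lambda>u. (\<Sum>t\<in>{1..leaves d}. basis (ocomp d t c) u)
                     - (\<Sum>s\<in>{1..leaves c}. basis (ocomp c s d) u))"

definition lam_br :: "(ptree \<Rightarrow> rat) \<Rightarrow> (ptree \<Rightarrow> rat) \<Rightarrow> ptree \<Rightarrow> rat" where
  "lam_br c d = (\<lambda>u. \<Sum>S\<in>supp c. \<Sum>T\<in>supp d. c S * d T * tree_br S T u)"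

text \<open>\<open>L\<^sub>0\<close>: a polynomial p with p(0)=0 represents the vector field p(x) d/dx.\<close>
definition L0 :: "rat poly set" where
  "L0 = {p. poly p 0 = 0}"

text \<open>[f d/dx, g d/dx] = (f g' - g f') d/dx.\<close>
definition vf_br :: "rat poly \<Rightarrow> rat poly \<Rightarrow> rat poly" where
  "vf_br f g = f * pderiv g - g * pderiv f"

definition eps1 :: "(ptree \<Rightarrow> rat) \<Rightarrow> rat poly" where
  "eps1 c = (\<Sum>t\<in>supp c. monom (c t) (leaves t))"

end

theory Submission
  imports Defs
begin

text \<open>
  Bracketing with the unit \<open>1 = s(x d/dx)\<close> multiplies a tree with m leaves by m - 1, while
  \<open>[x d/dx, x\<^sup>n d/dx] = (n - 1) x\<^sup>n d/dx\<close>; hence a unital splitting s sends \<open>x\<^sup>n d/dx\<close> into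
  the span of the trees with n leaves, with coefficients summing to 1 because \<open>\<epsilon>\<^sub>1 \<circ> s = id\<close>.
  So \<open>s(x\<^sup>2 d/dx)\<close> is the binary corolla and \<open>s(x\<^sup>3 d/dx) = a ((12)3) + b (1(23)) + c (123)\<close>
  with a + b + c = 1. The brackets then force \<open>s\<^sub>4 = [s\<^sub>2, s\<^sub>3]\<close> and \<open>s\<^sub>5 = [s\<^sub>2, s\<^sub>4] / 2\<close>, and
  \<open>s\<^sub>6\<close> is obtained both as \<open>[s\<^sub>3, s\<^sub>4]\<close> and as \<open>[s\<^sub>2, s\<^sub>5] / 3\<close>. Comparing the coefficients of
  three trees with six leaves gives a = b = c = 0, a contradiction.
\<close>

lemma leaves_ge_1: "wf_tree t \<Longrightarrow> 1 \<le> leaves t"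
proof (induction t)
  case (Node ts)
  then obtain t1 ts' where ts: "ts = t1 # ts'" by (cases ts) auto
  with Node have "1 \<le> leaves t1" by simp
  with ts show ?case by simp
qed simp

lemma leaves_list_ge_length: "wf_trees ts \<Longrightarrow> length ts \<le> leaves_list ts"
  by (induction ts) (auto dest: leaves_ge_1)

lemma wf_Node_obtain:
  assumes "wf_tree (Node ts)"
  obtains t1 t2 ts' where "ts = t1 # t2 # ts'" "wf_tree t1" "wf_tree t2" "wf_trees ts'"
  using assms by (cases ts rule: remdups_adj.cases) auto

lemma leaves_eq_1_iff: "wf_tree t \<Longrightarrow> leaves t = 1 \<longleftrightarrow> t = Leaf"
proof (cases t)
  case (Node ts)
  assume "wf_tree t"
  then obtain t1 t2 ts' where "ts = t1 # t2 # ts'" "wf_tree t1" "wf_tree t2"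
    using Node wf_Node_obtain by blast
  with Node show ?thesis by (auto dest!: leaves_ge_1)
qed simp

abbreviation "corolla2 \<equiv> Node [Leaf, Leaf]"
abbreviation "left_comb3 \<equiv> Node [corolla2, Leaf]"
abbreviation "right_comb3 \<equiv> Node [Leaf, corolla2]"
abbreviation "corolla3 \<equiv> Node [Leaf, Leaf, Leaf]"

lemma leaves_eq_2_iff: "wf_tree t \<Longrightarrow> leaves t = 2 \<longleftrightarrow> t = corolla2"
proof (cases t)
  case (Node ts)
  assume "wf_tree t"
  then obtain t1 t2 ts' where ts: "ts = t1 # t2 # ts'" and
    wf: "wf_tree t1" "wf_tree t2" "wf_trees ts'"
    using Node wf_Node_obtain by blast
  note bounds = leaves_ge_1[OF wf(1)] leaves_ge_1[OF wf(2)] leaves_list_ge_length[OF wf(3)]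
  show ?thesis
  proof
    assume "leaves t = 2"
    then have "leaves t1 + leaves t2 + leaves_list ts' = 2" using Node ts by simp
    with bounds have "leaves t1 = 1" "leaves t2 = 1" "length ts' = 0" by linarith+
    then show "t = corolla2" using Node ts wf leaves_eq_1_iff by auto
  qed simp
qed simp

lemma leaves_eq_3_iff:
  "wf_tree t \<Longrightarrow> leaves t = 3 \<longleftrightarrow> t = left_comb3 \<or> t = right_comb3 \<or> t = corolla3"
proof (cases t)
  case (Node ts)
  assume "wf_tree t"
  then obtain t1 t2 ts' where ts: "ts = t1 # t2 # ts'" and
    wf: "wf_tree t1" "wf_tree t2" "wf_trees ts'"
    using Node wf_Node_obtain by blast
  note bounds = leaves_ge_1[OF wf(1)] leaves_ge_1[OF wf(2)] leaves_list_ge_length[OF wf(3)]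
  show ?thesis
  proof (intro iffI)
    assume sum3: "leaves t = 3"
    show "t = left_comb3 \<or> t = right_comb3 \<or> t = corolla3"
    proof (cases ts')
      case Nil
      then have "leaves t1 = 1 \<and> leaves t2 = 2 \<or> leaves t1 = 2 \<and> leaves t2 = 1"
        using sum3 Node ts bounds by auto
      then show ?thesis using Node ts Nil wf leaves_eq_1_iff leaves_eq_2_iff by auto
    next
      case (Cons t3 ts'')
      with wf(3) have wf3: "wf_tree t3" "wf_trees ts''" by auto
      have "leaves t1 + leaves t2 + leaves t3 + leaves_list ts'' = 3"
        using sum3 Node ts Cons by simp
      with bounds leaves_ge_1[OF wf3(1)] leaves_list_ge_length[OF wf3(2)]
      have "leaves t1 = 1" "leaves t2 = 1" "leaves t3 = 1" "length ts'' = 0" by linarith+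
      then show ?thesis using Node ts Cons wf wf3 leaves_eq_1_iff by auto
    qed
  qed auto
qed simp

lemma graft_Leaf:
  "graft0 t i Leaf = t"
  "graft_list ts i Leaf = ts"
  by (induction t i Leaf and ts i Leaf rule: graft0_graft_list.induct) auto

definition lincomb :: "(ptree \<times> rat) list \<Rightarrow> ptree \<Rightarrow> rat" where
  "lincomb xs = (\<lambda>u. \<Sum>x\<leftarrow>xs. if fst x = u then snd x else 0)"

lemma lincomb_simps [simp]:
  "lincomb [] u = 0"
  "lincomb (x # xs) u = (if fst x = u then snd x else 0) + lincomb xs u"
  "lincomb (xs @ ys) u = lincomb xs u + lincomb ys u"
  by (simp_all add: lincomb_def)

lemma lincomb_concat: "lincomb (concat xss) u = (\<Sum>xs\<leftarrow>xss. lincomb xs u)"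
  by (induction xss) auto

definition scale_terms :: "rat \<Rightarrow> (ptree \<times> rat) list \<Rightarrow> (ptree \<times> rat) list" where
  "scale_terms r xs = map (\<lambda>x. (fst x, r * snd x)) xs"

lemma lincomb_scale_terms: "lincomb (scale_terms r xs) u = r * lincomb xs u"
  unfolding scale_terms_def by (induction xs) (auto simp: algebra_simps)

lemma supp_lincomb: "supp (lincomb xs) \<subseteq> fst ` set xs"
  by (induction xs) (auto simp: supp_def)

lemma sum_lincomb_mult:
  assumes "finite P" "fst ` set xs \<subseteq> P"
  shows "(\<Sum>S\<in>P. lincomb xs S * g S) = (\<Sum>x\<leftarrow>xs. snd x * g (fst x))"
  using assms(2)
proof (induction xs)
  case (Cons x xs)
  have "(\<Sum>S\<in>P. lincomb (x # xs) S * g S)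
      = (\<Sum>S\<in>P. if fst x = S then snd x * g S else 0) + (\<Sum>S\<in>P. lincomb xs S * g S)"
    by (auto simp: ring_distribs sum.distrib[symmetric] intro!: sum.cong)
  also have "(\<Sum>S\<in>P. if fst x = S then snd x * g S else 0) = snd x * g (fst x)"
    using Cons.prems assms(1) by (simp add: sum.delta)
  finally show ?case using Cons by simp
qed simp

lemma lincomb_of_supp_subset:
  assumes "supp c \<subseteq> set ts" "distinct ts"
  shows "c = lincomb (map (\<lambda>t. (t, c t)) ts)"
proof
  fix u
  have "lincomb (map (\<lambda>t. (t, c t)) ts) u = (if u \<in> set ts then c u else 0)"
    using assms(2) by (induction ts) auto
  then show "c u = lincomb (map (\<lambda>t. (t, c t)) ts) u"
    using assms(1) by (auto simp: supp_def)
qed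

definition tree_br_terms :: "ptree \<Rightarrow> ptree \<Rightarrow> (ptree \<times> rat) list" where
  "tree_br_terms c d = map (\<lambda>t. (ocomp d t c, 1)) [1..<leaves d + 1]
                      @ map (\<lambda>s. (ocomp c s d, -1)) [1..<leaves c + 1]"

lemma tree_br_eq_lincomb: "tree_br c d = lincomb (tree_br_terms c d)"
proof
  fix u
  have count: "lincomb (map (\<lambda>t. (f t, k)) [1..<n + 1]) u
             = k * (\<Sum>t\<in>{1..n}. basis (f t) u)" for f k n
  proof -
    have "lincomb (map (\<lambda>t. (f t, k)) xs) u = (\<Sum>t\<leftarrow>xs. k * basis (f t) u)" for xs
      by (induction xs) (auto simp: lincomb_def basis_def)
    also have "(\<Sum>t\<leftarrow>[1..<n + 1]. k * basis (f t) u) = (\<Sum>t\<in>set [1..<n + 1]. k * basis (f t) u)"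
      by (rule sum_list_distinct_conv_sum_set) simp
    also have "set [1..<n + 1] = {1..n}" by auto
    finally show ?thesis by (simp add: sum_distrib_left)
  qed
  show "tree_br c d u = lincomb (tree_br_terms c d) u"
    unfolding tree_br_def tree_br_terms_def lincomb_simps(3) count by simp
qed

lemma lam_br_eq_sum_superset:
  assumes "finite P" "supp c \<subseteq> P" "finite Q" "supp d \<subseteq> Q"
  shows "lam_br c d u = (\<Sum>S\<in>P. \<Sum>T\<in>Q. c S * d T * tree_br S T u)"
proof -
  have "lam_br c d u = (\<Sum>S\<in>supp c. \<Sum>T\<in>Q. c S * d T * tree_br S T u)"
    unfolding lam_br_def
    by (intro sum.cong refl sum.mono_neutral_left) (use assms in \<open>auto simp: supp_def\<close>)
  also have "\<dots> = (\<Sum>S\<in>P. \<Sum>T\<in>Q. c S * d T * tree_br S T u)"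
    by (rule sum.mono_neutral_left) (use assms in \<open>auto simp: supp_def\<close>)
  finally show ?thesis .
qed

definition lincomb_br_terms ::
    "(ptree \<times> rat) list \<Rightarrow> (ptree \<times> rat) list \<Rightarrow> (ptree \<times> rat) list" where
  "lincomb_br_terms xs ys =
     concat (map (\<lambda>x. concat (map (\<lambda>y.
       scale_terms (snd x * snd y) (tree_br_terms (fst x) (fst y))) ys)) xs)"

lemma lam_br_lincomb: "lam_br (lincomb xs) (lincomb ys) = lincomb (lincomb_br_terms xs ys)"
proof
  fix u
  let ?P = "fst ` set xs" and ?Q = "fst ` set ys"
  have "lam_br (lincomb xs) (lincomb ys) u
      = (\<Sum>S\<in>?P. lincomb xs S * (\<Sum>T\<in>?Q. lincomb ys T * tree_br S T u))"
    by (subst lam_br_eq_sum_superset[of ?P _ ?Q])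
      (auto simp: supp_lincomb sum_distrib_left mult.assoc)
  also have "\<dots> = (\<Sum>x\<leftarrow>xs. snd x * (\<Sum>y\<leftarrow>ys. snd y * tree_br (fst x) (fst y) u))"
    by (simp add: sum_lincomb_mult)
  also have "\<dots> = lincomb (lincomb_br_terms xs ys) u"
    by (simp add: lincomb_br_terms_def lincomb_concat lincomb_scale_terms tree_br_eq_lincomb
        comp_def sum_list_const_mult[symmetric] mult.assoc)
  finally show "lam_br (lincomb xs) (lincomb ys) u = lincomb (lincomb_br_terms xs ys) u" .
qed

lemma lam_br_basis_Leaf:
  assumes "c \<in> LamQTree"
  shows "lam_br (basis Leaf) c u = (of_nat (leaves u) - 1) * c u"
proof -
  have fin: "finite (supp c)" using assms by (simp add: LamQTree_def)
  have tree_br_Leaf: "tree_br Leaf T u = (of_nat (leaves T) - 1) * basis T u" for T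
    by (simp add: tree_br_def ocomp_def graft_Leaf algebra_simps)
  have "lam_br (basis Leaf) c u = (\<Sum>S\<in>{Leaf}. \<Sum>T\<in>supp c. basis Leaf S * c T * tree_br S T u)"
    by (rule lam_br_eq_sum_superset) (use fin in \<open>auto simp: supp_def basis_def\<close>)
  also have "\<dots> = (\<Sum>T\<in>supp c. if T = u then c T * (of_nat (leaves T) - 1) else 0)"
    by (auto simp: tree_br_Leaf basis_def intro!: sum.cong)
  also have "\<dots> = (of_nat (leaves u) - 1) * c u"
    using fin by (simp add: sum.delta' supp_def)
  finally show ?thesis .
qed

lemma monom_in_L0: "1 \<le> n \<Longrightarrow> monom (1::rat) n \<in> L0"
  by (simp add: L0_def poly_monom)

lemma vf_br_monom:
  assumes "1 \<le> m" "1 \<le> n"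
  shows "vf_br (monom (1::rat) m) (monom 1 n) = smult (of_nat n - of_nat m) (monom 1 (m + n - 1))"
proof -
  have "m + (n - 1) = m + n - 1" "n + (m - 1) = m + n - 1" using assms by auto
  then show ?thesis
    by (simp add: vf_br_def pderiv_monom mult_monom smult_monom poly_eq_iff coeff_monom algebra_simps)
qed

lemma coeff_eps1: "coeff (eps1 c) n = (\<Sum>t\<in>supp c. if leaves t = n then c t else 0)"
  by (auto simp: eps1_def coeff_sum coeff_monom intro!: sum.cong)

text \<open>
  The trees \<open>((12)(3(45)))6\<close>, \<open>1(((23)4)(56))\<close> and \<open>(12)(34)(56)\<close> isolate b, a and c.
\<close>

lemma arity6_coefficients_vanish:
  fixes a b c :: rat
  defines "s3 \<equiv> [(left_comb3, a), (right_comb3, b), (corolla3, c)]"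
  defines "s4 \<equiv> lincomb_br_terms [(corolla2, 1)] s3"
  defines "s5 \<equiv> scale_terms (1/2) (lincomb_br_terms [(corolla2, 1)] s4)"
  assumes eq: "\<And>u. 3 * lincomb (lincomb_br_terms s3 s4) u
                     = lincomb (lincomb_br_terms [(corolla2, 1)] s5) u"
  shows "a = 0 \<and> b = 0 \<and> c = 0"
proof -
  note expand = s3_def s4_def s5_def lincomb_br_terms_def tree_br_terms_def scale_terms_def ocomp_def
  have "b = 0"
    using eq[of "Node [Node [corolla2, Node [Leaf, corolla2]], Leaf]"]
    unfolding expand by (simp add: algebra_simps)
  moreover have "a = 0"
    using eq[of "Node [Leaf, Node [Node [corolla2, Leaf], corolla2]]"]
    unfolding expand by (simp add: algebra_simps)
  moreover have "c = 0"
    using eq[of "Node [corolla2, corolla2, corolla2]"]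
    unfolding expand by (simp add: algebra_simps)
  ultimately show ?thesis by simp
qed

locale unital_splitting =
  fixes s :: "rat poly \<Rightarrow> ptree \<Rightarrow> rat"
  assumes splitting_in_LamQTree: "p \<in> L0 \<Longrightarrow> s p \<in> LamQTree"
    and splitting_smult: "p \<in> L0 \<Longrightarrow> s (smult a p) = (\<lambda>u. a * s p u)"
    and splitting_bracket: "p \<in> L0 \<Longrightarrow> q \<in> L0 \<Longrightarrow> s (vf_br p q) = lam_br (s p) (s q)"
    and splitting_eps1: "p \<in> L0 \<Longrightarrow> eps1 (s p) = p"
    and splitting_unit: "s [:0, 1:] = basis Leaf"
begin

lemma splitting_bracket_monom:
  assumes "1 \<le> m" "1 \<le> n"
  shows "(of_nat n - of_nat m) * s (monom 1 (m + n - 1)) u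
       = lam_br (s (monom 1 m)) (s (monom 1 n)) u"
proof -
  have "lam_br (s (monom 1 m)) (s (monom 1 n)) = s (vf_br (monom 1 m) (monom 1 n))"
    using assms by (simp add: splitting_bracket monom_in_L0)
  also have "\<dots> = s (smult (of_nat n - of_nat m) (monom 1 (m + n - 1)))"
    using assms by (simp add: vf_br_monom)
  finally show ?thesis
    using assms by (simp add: splitting_smult monom_in_L0)
qed

lemma splitting_monom_homogeneous:
  assumes "1 \<le> n" "s (monom 1 n) u \<noteq> 0"
  shows "leaves u = n"
proof -
  have "monom (1::rat) 1 = [:0, 1:]"
    by (simp add: monom_Suc)
  then have "s (monom 1 1) = basis Leaf"
    using splitting_unit by (simp only:)
  then have "(of_nat n - 1) * s (monom 1 n) u = lam_br (basis Leaf) (s (monom 1 n)) u"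
    using splitting_bracket_monom[of 1 n u] assms(1) by simp
  also have "\<dots> = (of_nat (leaves u) - 1) * s (monom 1 n) u"
    using assms(1) by (simp add: lam_br_basis_Leaf splitting_in_LamQTree monom_in_L0)
  finally have "(of_nat n :: rat) = of_nat (leaves u)"
    using assms(2) by simp
  then show ?thesis by simp
qed

lemma splitting_monom_supp:
  assumes "1 \<le> n"
  shows "supp (s (monom 1 n)) \<subseteq> {t. wf_tree t \<and> leaves t = n}"
  using assms splitting_in_LamQTree[OF monom_in_L0] splitting_monom_homogeneous
  by (auto simp: LamQTree_def supp_def)

lemma splitting_monom_coeff_sum:
  assumes "1 \<le> n"
  shows "(\<Sum>t\<in>supp (s (monom 1 n)). s (monom 1 n) t) = 1"
proof -
  have "coeff (eps1 (s (monom 1 n))) n = 1"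
    using assms by (simp add: splitting_eps1 monom_in_L0)
  then show ?thesis
    using splitting_monom_supp[OF assms] by (simp add: coeff_eps1 subset_iff)
qed

lemma splitting_monom_as_lincomb:
  assumes "1 \<le> n" "set ts = {t. wf_tree t \<and> leaves t = n}" "distinct ts"
  shows "s (monom 1 n) = lincomb (map (\<lambda>t. (t, s (monom 1 n) t)) ts)"
    and "(\<Sum>t\<leftarrow>ts. s (monom 1 n) t) = 1"
proof -
  have supp: "supp (s (monom 1 n)) \<subseteq> set ts"
    using splitting_monom_supp[OF assms(1)] assms(2) by simp
  then show "s (monom 1 n) = lincomb (map (\<lambda>t. (t, s (monom 1 n) t)) ts)"
    using assms(3) by (rule lincomb_of_supp_subset)
  have "(\<Sum>t\<leftarrow>ts. s (monom 1 n) t) = (\<Sum>t\<in>set ts. s (monom 1 n) t)"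
    using assms(3) by (rule sum_list_distinct_conv_sum_set)
  also have "\<dots> = (\<Sum>t\<in>supp (s (monom 1 n)). s (monom 1 n) t)"
    using supp by (intro sum.mono_neutral_right) (auto simp: supp_def)
  finally show "(\<Sum>t\<leftarrow>ts. s (monom 1 n) t) = 1"
    using splitting_monom_coeff_sum[OF assms(1)] by simp
qed

lemma absurd: False
proof -
  have "set [corolla2] = {t. wf_tree t \<and> leaves t = 2}"
    using leaves_eq_2_iff by force
  from splitting_monom_as_lincomb[OF _ this]
  have s2: "s (monom 1 2) = lincomb [(corolla2, 1)]" by simp
  define a b c where "a = s (monom 1 3) left_comb3" and "b = s (monom 1 3) right_comb3"
    and "c = s (monom 1 3) corolla3"
  define s3 where "s3 = [(left_comb3, a), (right_comb3, b), (corolla3, c)]"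
  define s4 where "s4 = lincomb_br_terms [(corolla2, 1)] s3"
  define s5 where "s5 = scale_terms (1/2) (lincomb_br_terms [(corolla2, 1)] s4)"
  have "set [left_comb3, right_comb3, corolla3] = {t. wf_tree t \<and> leaves t = 3}"
    using leaves_eq_3_iff by auto
  from splitting_monom_as_lincomb[OF _ this]
  have s3_eq: "s (monom 1 3) = lincomb s3" and abc: "a + b + c = 1"
    by (simp_all add: a_def b_def c_def s3_def)
  have s4_eq: "s (monom 1 4) = lincomb s4"
    using splitting_bracket_monom[of 2 3] by (simp add: s2 s3_eq s4_def lam_br_lincomb fun_eq_iff)
  have "2 * s (monom 1 5) u = lincomb (lincomb_br_terms [(corolla2, 1)] s4) u" for u
    using splitting_bracket_monom[of 2 4] by (simp add: s2 s4_eq lam_br_lincomb)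
  then have s5_eq: "s (monom 1 5) = lincomb s5"
    by (simp add: s5_def lincomb_scale_terms fun_eq_iff field_simps)
  have "3 * lincomb (lincomb_br_terms s3 s4) u = lincomb (lincomb_br_terms [(corolla2, 1)] s5) u" for u
    using splitting_bracket_monom[of 3 4 u] splitting_bracket_monom[of 2 5 u]
    by (simp add: s2 s3_eq s4_eq s5_eq lam_br_lincomb)
  then have "a = 0 \<and> b = 0 \<and> c = 0"
    unfolding s3_def s4_def s5_def by (rule arity6_coefficients_vanish)
  with abc show False by simp
qed

end

theorem theorem7p1:
  shows "\<not> (\<exists>s :: rat poly \<Rightarrow> ptree \<Rightarrow> rat.
            (\<forall>p\<in>L0. s p \<in> LamQTree)
          \<and> (\<forall>p\<in>L0. \<forall>q\<in>L0. s (p + q) = (\<lambda>u. s p u + s q u))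
          \<and> (\<forall>a. \<forall>p\<in>L0. s (smult a p) = (\<lambda>u. a * s p u))
          \<and> (\<forall>p\<in>L0. \<forall>q\<in>L0. s (vf_br p q) = lam_br (s p) (s q))
          \<and> (\<forall>p\<in>L0. eps1 (s p) = p)
          \<and> s [:0, 1:] = basis Leaf)"
proof
  assume "\<exists>s :: rat poly \<Rightarrow> ptree \<Rightarrow> rat.
            (\<forall>p\<in>L0. s p \<in> LamQTree)
          \<and> (\<forall>p\<in>L0. \<forall>q\<in>L0. s (p + q) = (\<lambda>u. s p u + s q u))
          \<and> (\<forall>a. \<forall>p\<in>L0. s (smult a p) = (\<lambda>u. a * s p u))
          \<and> (\<forall>p\<in>L0. \<forall>q\<in>L0. s (vf_br p q) = lam_br (s p) (s q))
          \<and> (\<forall>p\<in>L0. eps1 (s p) = p)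
          \<and> s [:0, 1:] = basis Leaf"
  then obtain s where "unital_splitting s"
    unfolding unital_splitting_def by blast
  then show False
    by (rule unital_splitting.absurd)
qed

end
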